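(* Let $q$ be even and $n\ge1$. If $W$ is an $n$-dimensional Wild subspace over $\mathrm{GF}(q)$, then $\{f(1): f\in W\}=\mathrm{GF}(q^n)$.
   Context: Let $q$ be even. An o-permutation over $\mathrm{GF}(q^n)$ is a function $f:\mathrm{GF}(q^n)\to\mathrm{GF}(q^n)$ with $f(0)=0$ such that, for every $s\in\mathrm{GF}(q^n)$, the map $x\mapsto (f(x+s)+f(s))/x$ is a permutation of $\mathrm{GF}(q^n)\setminus\{0\}$. Let $\mathfrak F$ be the $\mathrm{GF}(q)$-vector space of all functions $f:\mathrm{GF}(q^n)\to\mathrm{GF}(q^n)$ with $f(0)=0$. An $n$-dimensional Wild subspace over $\mathrm{GF}(q)$ is an $n$-dimensional $\mathrm{GF}(q)$-subspace $W$ of $\mathfrak F$ every nonzero element of which is an o-permutation over $\mathrm{GF}(q^n)$. *)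

theory Defs
  imports Main
begin

text \<open>The ambient finite field GF(q^n) is a finite field type 'a; the subfield GF(q)
  is a subset K of 'a closed under the field operations.\<close>

definition is_subfield :: "'a::field set \<Rightarrow> bool" where
  "is_subfield K \<longleftrightarrow> 0 \<in> K \<and> 1 \<in> K \<and>
     (\<forall>x\<in>K. \<forall>y\<in>K. x + y \<in> K \<and> x * y \<in> K) \<and>
     (\<forall>x\<in>K. - x \<in> K) \<and> (\<forall>x\<in>K. x \<noteq> 0 \<longrightarrow> inverse x \<in> K)"

definition o_permutation :: "('a::field \<Rightarrow> 'a) \<Rightarrow> bool" where
  "o_permutation f \<longleftrightarrow> f 0 = 0 \<and>
     (\<forall>s. bij_betw (\<lambda>x. (f (x + s) + f s) / x) (UNIV - {0}) (UNIV - {0}))"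

definition zero_fixing :: "('a::field \<Rightarrow> 'a) set" where
  "zero_fixing = {f. f 0 = 0}"

definition lin_comb :: "('a::field \<Rightarrow> 'a) list \<Rightarrow> (nat \<Rightarrow> 'a) \<Rightarrow> ('a \<Rightarrow> 'a)" where
  "lin_comb bs c = (\<lambda>x. \<Sum>i<length bs. c i * (bs ! i) x)"

definition is_subspace_dim :: "'a::field set \<Rightarrow> nat \<Rightarrow> ('a \<Rightarrow> 'a) set \<Rightarrow> bool" where
  "is_subspace_dim K n W \<longleftrightarrow>
     (\<exists>bs. length bs = n \<and> set bs \<subseteq> zero_fixing \<and>
        W = {lin_comb bs c | c. \<forall>i<n. c i \<in> K} \<and>
        (\<forall>c. (\<forall>i<n. c i \<in> K) \<longrightarrow> lin_comb bs c = (\<lambda>_. 0) \<longrightarrow> (\<forall>i<n. c i = 0)))"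

definition wild_subspace :: "'a::field set \<Rightarrow> nat \<Rightarrow> ('a \<Rightarrow> 'a) set \<Rightarrow> bool" where
  "wild_subspace K n W \<longleftrightarrow> is_subspace_dim K n W \<and>
     (\<forall>f\<in>W. f \<noteq> (\<lambda>_. 0) \<longrightarrow> o_permutation f)"

end

theory Submission
  imports Defs "HOL-Library.FuncSet"
begin

text \<open>Taking \<open>s = 0\<close> in the definition shows that a nonzero o-permutation vanishes only at 0.
  Since \<open>W\<close> is closed under differences, evaluation at 1 is therefore injective on \<open>W\<close>, and
  \<open>|W| = q^n = |GF(q^n)|\<close> makes it bijective.\<close>

lemma o_permutation_nonzero:
  assumes "o_permutation f" and "x \<noteq> 0"
  shows "f x \<noteq> 0"
proof -
  have "f 0 = 0" and bij: "bij_betw (\<lambda>y. (f (y + 0) + f 0) / y) (UNIV - {0}) (UNIV - {0})"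
    using assms(1) unfolding o_permutation_def by blast+
  then have "f x / x \<noteq> 0"
    using bij_betw_apply[OF bij] assms(2) by fastforce
  then show ?thesis by simp
qed

lemma subfield_diff:
  assumes "is_subfield K" and "x \<in> K" and "y \<in> K"
  shows "x - y \<in> K"
  using assms unfolding is_subfield_def by (metis diff_conv_add_uminus)

lemma lin_comb_diff:
  "lin_comb bs (\<lambda>i. c i - d i) = (\<lambda>x. lin_comb bs c x - lin_comb bs d x)"
  unfolding lin_comb_def by (simp add: left_diff_distrib sum_subtractf)

lemma lin_comb_restrict:
  "lin_comb bs (restrict c {..<length bs}) = lin_comb bs c"
  unfolding lin_comb_def by simp

lemma subspace_dim_diff:
  assumes "is_subfield K" and "is_subspace_dim K n W" and "f \<in> W" and "g \<in> W"
  shows "(\<lambda>x. f x - g x) \<in> W"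
proof -
  obtain bs where W: "W = {lin_comb bs c | c. \<forall>i<n. c i \<in> K}"
    using assms(2) unfolding is_subspace_dim_def by blast
  obtain c d where f: "f = lin_comb bs c" and g: "g = lin_comb bs d"
    and cK: "\<forall>i<n. c i \<in> K" and dK: "\<forall>i<n. d i \<in> K"
    using assms(3,4) W by blast
  have "(\<lambda>x. f x - g x) = lin_comb bs (\<lambda>i. c i - d i)"
    using f g by (simp add: lin_comb_diff)
  moreover have "\<forall>i<n. c i - d i \<in> K"
    using cK dK subfield_diff[OF assms(1)] by blast
  ultimately show ?thesis
    using W by blast
qed

lemma card_subspace_dim:
  assumes "is_subfield K" and "finite K" and "is_subspace_dim K n W"
  shows "card W = card K ^ n"
proof -
  obtain bs where len: "length bs = n"
    and W: "W = {lin_comb bs c | c. \<forall>i<n. c i \<in> K}"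
    and indep: "\<And>c. \<forall>i<n. c i \<in> K \<Longrightarrow> lin_comb bs c = (\<lambda>_. 0) \<Longrightarrow> \<forall>i<n. c i = 0"
    using assms(3) unfolding is_subspace_dim_def by blast
  let ?C = "PiE {..<n} (\<lambda>_. K)"
  have "W = lin_comb bs ` ?C"
  proof
    show "W \<subseteq> lin_comb bs ` ?C"
    proof
      fix f assume "f \<in> W"
      then obtain c where f: "f = lin_comb bs c" and cK: "\<forall>i<n. c i \<in> K"
        using W by blast
      have "f = lin_comb bs (restrict c {..<n})"
        using f len lin_comb_restrict by metis
      moreover have "restrict c {..<n} \<in> ?C"
        using cK by simp
      ultimately show "f \<in> lin_comb bs ` ?C" by blast
    qed
    show "lin_comb bs ` ?C \<subseteq> W"
      using W by (auto simp: PiE_iff)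
  qed
  moreover have "inj_on (lin_comb bs) ?C"
  proof (rule inj_onI)
    fix c d assume c: "c \<in> ?C" and d: "d \<in> ?C" and eq: "lin_comb bs c = lin_comb bs d"
    have diff_K: "\<forall>i<n. c i - d i \<in> K"
      using c d subfield_diff[OF assms(1)] by (auto simp: PiE_iff)
    have "lin_comb bs (\<lambda>i. c i - d i) = (\<lambda>_. 0)"
      using eq by (simp add: lin_comb_diff)
    then have "\<forall>i<n. c i = d i"
      using indep[OF diff_K] by simp
    then show "c = d"
      by (intro PiE_ext[OF c d]) simp
  qed
  ultimately show ?thesis
    using assms(2) by (simp add: card_image card_PiE)
qed

lemma inj_on_eval_diff_closed:
  fixes W :: "('a \<Rightarrow> 'b::ab_group_add) set"
  assumes "\<And>f g. f \<in> W \<Longrightarrow> g \<in> W \<Longrightarrow> (\<lambda>x. f x - g x) \<in> W"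
    and "\<And>f. f \<in> W \<Longrightarrow> f \<noteq> (\<lambda>_. 0) \<Longrightarrow> f a \<noteq> 0"
  shows "inj_on (\<lambda>f. f a) W"
proof (rule inj_onI)
  fix f g assume "f \<in> W" "g \<in> W" "f a = g a"
  then have "(\<lambda>x. f x - g x) \<in> W" and "(\<lambda>x. f x - g x) a = 0"
    using assms(1) by simp_all
  then have "(\<lambda>x. f x - g x) = (\<lambda>_. 0)"
    using assms(2) by blast
  then show "f = g"
    unfolding fun_eq_iff by simp
qed

theorem corollary1:
  fixes K :: "'a::{field,finite} set" and n :: nat and W :: "('a \<Rightarrow> 'a) set"
  assumes "is_subfield K"
    and "even (card K)"
    and "card (UNIV :: 'a set) = card K ^ n"
    and "n \<ge> 1"
    and "wild_subspace K n W"
  shows "(\<lambda>f. f 1) ` W = UNIV"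
proof -
  have subspace: "is_subspace_dim K n W"
    and o_perm: "\<And>f. f \<in> W \<Longrightarrow> f \<noteq> (\<lambda>_. 0) \<Longrightarrow> o_permutation f"
    using assms(5) unfolding wild_subspace_def by auto
  have nonzero_at_1: "f 1 \<noteq> 0" if "f \<in> W" and "f \<noteq> (\<lambda>_. 0)" for f
    using o_permutation_nonzero[OF o_perm[OF that]] by simp
  have "inj_on (\<lambda>f. f 1) W"
    by (rule inj_on_eval_diff_closed[OF subspace_dim_diff[OF assms(1) subspace] nonzero_at_1])
  then have "card ((\<lambda>f. f 1) ` W) = card (UNIV :: 'a set)"
    using card_subspace_dim[OF assms(1) _ subspace] assms(3) by (simp add: card_image)
  then show ?thesis
    using card_subset_eq[of UNIV "(\<lambda>f. f 1) ` W"] by simp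
qed

end
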